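(* Let $\mathcal H$ be a separable Hilbert space with inner product $\langle\cdot,\cdot\rangle$ and norm $\|\cdot\|$. Let $(X_i,Y_i)$, $i=1,\dots,n$, be i.i.d. $\mathcal H\times\mathbb R$-valued random variables satisfying $Y_i=\alpha+\langle X_i,\beta\rangle+\varepsilon_i$, where $\varepsilon_1,\dots,\varepsilon_n$ are independent of $X_1,\dots,X_n$, i.i.d., centred, with cdf twice differentiable with bounded density and bounded derivative of the density. Let $\hat\varepsilon_j=Y_j-\hat\alpha-\langle X_j,\hat\beta\rangle$. Suppose either (i) $\hat\alpha=\overline Y_n-\langle\overline X_n,\hat\beta\rangle$, $\|\hat\beta-\beta\|=o_{\mathbb P}(n^{-1/4})$, $E\|X_1\|^4<\infty$ and $E[\varepsilon_1^2]<\infty$; or (ii) $\alpha=\hat\alpha=0$, $\|\hat\beta-\beta\|=o_{\mathbb P}(n^{-1/4})$, $E[X_1]=0$ and $E\|X_1\|^2<\infty$. Then $\frac1{\sqrt n}\sum_{j=1}^n(\hat\varepsilon_j-\varepsilon_j)^2=o_{\mathbb P}(1)$.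
   Context: $\overline Y_n=\frac1n\sum Y_i$, $\overline X_n=\frac1n\sum X_i$; $\hat\alpha,\hat\beta$ are estimators of $\alpha\in\mathbb R,\beta\in\mathcal H$ computed from the sample. *)

theory Defs
  imports "HOL-Probability.Probability"
begin

definition o_P :: "'a measure \<Rightarrow> (nat \<Rightarrow> 'a \<Rightarrow> real) \<Rightarrow> (nat \<Rightarrow> real) \<Rightarrow> bool" where
  "o_P M Z r \<longleftrightarrow>
     (\<forall>e>0. (\<lambda>n. measure M {\<omega> \<in> space M. e < \<bar>Z n \<omega>\<bar> / r n}) \<longlonglongrightarrow> 0)"

end

theory Submission
  imports Defs "HOL-Real_Asymp.Real_Asymp"
begin

(* Since eps_hat j - eps j = (alpha - ahat) - <X j, bhat - beta>, Cauchy-Schwarz bounds the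
   statistic by 2 sqrt n (alpha - ahat)^2 + 2 (sqrt n |bhat - beta|^2) (1/n) sum_j |X j|^2.
   The factor sqrt n |bhat - beta|^2 is o_P(1) by the rate assumption, and the empirical second
   moment is bounded in L^1 (its expectation is E|X 0|^2), so the product is o_P(1).
   In case (ii) the intercept term vanishes. In case (i), alpha - ahat = <Xbar, bhat - beta> - epsbar,
   and sqrt n epsbar^2 has expectation E[eps 0^2] / sqrt n, which tends to 0.
   Neither the independence of X from eps or of the X i among themselves, nor the smoothness of
   the error distribution, nor E X = 0 in case (ii) is needed; of the fourth moment in case (i)
   only the finiteness of E|X 0|^2 is used. *)

lemma square_diff_le: "(p - q)\<^sup>2 \<le> 2 * p\<^sup>2 + 2 * q\<^sup>2" for p q :: real
proof -
  have "0 \<le> (p + q)\<^sup>2" by simp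
  then show ?thesis by (simp add: power2_eq_square algebra_simps)
qed

lemma square_inner_le: "(x \<bullet> y)\<^sup>2 \<le> (norm x)\<^sup>2 * (norm y)\<^sup>2"
  using Cauchy_Schwarz_ineq[of x y] by (simp add: power2_norm_eq_inner)

lemma power2_norm_mean_le:
  fixes x :: "nat \<Rightarrow> 'h::real_normed_vector"
  shows "(norm ((1 / real n) *\<^sub>R (\<Sum>i<n. x i)))\<^sup>2 \<le> (\<Sum>i<n. (norm (x i))\<^sup>2) / real n"
proof (cases "n = 0")
  case False
  have "norm ((1 / real n) *\<^sub>R (\<Sum>i<n. x i)) \<le> (\<Sum>i<n. norm (x i)) / real n"
    using norm_sum[of x "{..<n}"] by (simp add: divide_right_mono)
  then have "(norm ((1 / real n) *\<^sub>R (\<Sum>i<n. x i)))\<^sup>2 \<le> ((\<Sum>i<n. norm (x i)) / real n)\<^sup>2"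
    by (rule power_mono) simp
  also have "\<dots> = (\<Sum>i<n. norm (x i))\<^sup>2 / (real n)\<^sup>2"
    by (simp add: power_divide)
  also have "\<dots> \<le> (\<Sum>i<n. (norm (x i))\<^sup>2) * real n / (real n)\<^sup>2"
    using sum_squared_le_sum_of_squares[of "\<lambda>i. norm (x i)" "{..<n}"]
    by (simp add: divide_right_mono)
  also have "\<dots> = (\<Sum>i<n. (norm (x i))\<^sup>2) / real n"
    using False by (simp add: power2_eq_square)
  finally show ?thesis .
qed simp

lemma sum_square_diff_inner_le:
  fixes x :: "nat \<Rightarrow> 'h::real_inner"
  shows "(\<Sum>j<n. (c - x j \<bullet> d)\<^sup>2) \<le> 2 * (real n * c\<^sup>2 + (norm d)\<^sup>2 * (\<Sum>j<n. (norm (x j))\<^sup>2))"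
proof -
  have "(c - x j \<bullet> d)\<^sup>2 \<le> 2 * c\<^sup>2 + 2 * ((norm d)\<^sup>2 * (norm (x j))\<^sup>2)" for j
  proof -
    have "(x j \<bullet> d)\<^sup>2 \<le> (norm d)\<^sup>2 * (norm (x j))\<^sup>2"
      using square_inner_le[of "x j" d] by (simp add: mult.commute)
    then show ?thesis
      using square_diff_le[of c "x j \<bullet> d"] by linarith
  qed
  then have "(\<Sum>j<n. (c - x j \<bullet> d)\<^sup>2) \<le> (\<Sum>j<n. 2 * c\<^sup>2 + 2 * ((norm d)\<^sup>2 * (norm (x j))\<^sup>2))"
    by (rule sum_mono)
  then show ?thesis
    by (simp add: sum.distrib sum_distrib_left algebra_simps)
qed

lemma residual_sum_square_le:
  fixes x :: "nat \<Rightarrow> 'h::real_inner"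
  assumes model: "\<And>i. y i = \<alpha> + x i \<bullet> \<beta> + e i"
  shows "1 / sqrt (real n) * (\<Sum>j<n. (y j - a - x j \<bullet> b - e j)\<^sup>2)
    \<le> 2 * (sqrt (real n) * (\<alpha> - a)\<^sup>2)
      + 2 * (sqrt (real n) * (norm (b - \<beta>))\<^sup>2 * ((\<Sum>j<n. (norm (x j))\<^sup>2) / real n))"
proof (cases "n = 0")
  case False
  have residual: "y j - a - x j \<bullet> b - e j = (\<alpha> - a) - x j \<bullet> (b - \<beta>)" for j
    by (simp add: model inner_diff_right)
  have "1 / sqrt (real n) * (\<Sum>j<n. (y j - a - x j \<bullet> b - e j)\<^sup>2)
      = 1 / sqrt (real n) * (\<Sum>j<n. ((\<alpha> - a) - x j \<bullet> (b - \<beta>))\<^sup>2)"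
    by (simp only: residual)
  also have "\<dots> \<le> 1 / sqrt (real n)
      * (2 * (real n * (\<alpha> - a)\<^sup>2 + (norm (b - \<beta>))\<^sup>2 * (\<Sum>j<n. (norm (x j))\<^sup>2)))"
    by (intro mult_left_mono sum_square_diff_inner_le) simp
  also have "\<dots> = 2 * (sqrt (real n) * (\<alpha> - a)\<^sup>2)
      + 2 * (sqrt (real n) * (norm (b - \<beta>))\<^sup>2 * ((\<Sum>j<n. (norm (x j))\<^sup>2) / real n))"
    using False by (simp add: field_simps) (simp flip: mult.assoc)
  finally show ?thesis .
qed simp

lemma intercept_error_square_le:
  fixes x :: "nat \<Rightarrow> 'h::real_inner"
  assumes model: "\<And>i. y i = \<alpha> + x i \<bullet> \<beta> + e i"
    and intercept: "a = (\<Sum>i<n. y i) / real n - ((1 / real n) *\<^sub>R (\<Sum>i<n. x i)) \<bullet> b"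
    and "0 < n"
  shows "(\<alpha> - a)\<^sup>2 \<le> 2 * ((\<Sum>i<n. e i) / real n)\<^sup>2
    + 2 * ((norm (b - \<beta>))\<^sup>2 * ((\<Sum>i<n. (norm (x i))\<^sup>2) / real n))"
proof -
  define xbar where "xbar = (1 / real n) *\<^sub>R (\<Sum>i<n. x i)"
  have "(\<Sum>i<n. y i) / real n = \<alpha> + xbar \<bullet> \<beta> + (\<Sum>i<n. e i) / real n"
    using \<open>0 < n\<close>
    by (simp add: model sum.distrib xbar_def inner_sum_left add_divide_distrib)
  then have "\<alpha> - a = xbar \<bullet> (b - \<beta>) - (\<Sum>i<n. e i) / real n"
    by (simp add: intercept xbar_def inner_diff_right)
  then have "(\<alpha> - a)\<^sup>2 \<le> 2 * (xbar \<bullet> (b - \<beta>))\<^sup>2 + 2 * ((\<Sum>i<n. e i) / real n)\<^sup>2"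
    using square_diff_le by presburger
  moreover have "(xbar \<bullet> (b - \<beta>))\<^sup>2 \<le> (norm (b - \<beta>))\<^sup>2 * (norm xbar)\<^sup>2"
    using square_inner_le[of xbar "b - \<beta>"] by (simp add: mult.commute)
  moreover have "(norm (b - \<beta>))\<^sup>2 * (norm xbar)\<^sup>2
      \<le> (norm (b - \<beta>))\<^sup>2 * ((\<Sum>i<n. (norm (x i))\<^sup>2) / real n)"
    unfolding xbar_def by (intro mult_left_mono power2_norm_mean_le) simp
  ultimately show ?thesis by linarith
qed

lemma residual_sum_square_le_mean_intercept:
  fixes x :: "nat \<Rightarrow> 'h::real_inner"
  assumes model: "\<And>i. y i = \<alpha> + x i \<bullet> \<beta> + e i"
    and intercept: "a = (\<Sum>i<n. y i) / real n - ((1 / real n) *\<^sub>R (\<Sum>i<n. x i)) \<bullet> b"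
  shows "1 / sqrt (real n) * (\<Sum>j<n. (y j - a - x j \<bullet> b - e j)\<^sup>2)
    \<le> 4 * (sqrt (real n) * ((\<Sum>i<n. e i) / real n)\<^sup>2)
      + 6 * (sqrt (real n) * (norm (b - \<beta>))\<^sup>2 * ((\<Sum>j<n. (norm (x j))\<^sup>2) / real n))"
proof (cases "n = 0")
  case False
  have "sqrt (real n) * (\<alpha> - a)\<^sup>2 \<le> sqrt (real n) * (2 * ((\<Sum>i<n. e i) / real n)\<^sup>2
      + 2 * ((norm (b - \<beta>))\<^sup>2 * ((\<Sum>i<n. (norm (x i))\<^sup>2) / real n)))"
    using False by (intro mult_left_mono intercept_error_square_le[OF model intercept]) simp_all
  moreover have "\<dots> = 2 * (sqrt (real n) * ((\<Sum>i<n. e i) / real n)\<^sup>2)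
      + 2 * (sqrt (real n) * (norm (b - \<beta>))\<^sup>2 * ((\<Sum>i<n. (norm (x i))\<^sup>2) / real n))"
    by (simp add: algebra_simps)
  moreover have "1 / sqrt (real n) * (\<Sum>j<n. (y j - a - x j \<bullet> b - e j)\<^sup>2)
    \<le> 2 * (sqrt (real n) * (\<alpha> - a)\<^sup>2)
      + 2 * (sqrt (real n) * (norm (b - \<beta>))\<^sup>2 * ((\<Sum>j<n. (norm (x j))\<^sup>2) / real n))"
    using model by (rule residual_sum_square_le)
  ultimately show ?thesis
    by linarith
qed simp

lemma square_div_powr_neg_quarter:
  "(x / real n powr (-1/4))\<^sup>2 = sqrt (real n) * x\<^sup>2"
proof (cases "n = 0")
  case False
  have "(real n powr (1/4))\<^sup>2 = sqrt (real n)"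
    by (simp add: powr_powr flip: powr_realpow' powr_half_sqrt)
  then show ?thesis
    by (simp add: powr_minus_divide power_divide power_mult_distrib)
qed simp \<comment> \<open>at n = 0 both sides vanish: 0 powr _ = 0 and x / 0 = 0\<close>

lemma (in finite_measure) integrable_norm_power_mono:
  fixes f :: "'a \<Rightarrow> 'b::real_normed_vector"
  assumes "p \<le> q" and f: "f \<in> borel_measurable M" and int: "integrable M (\<lambda>x. norm (f x) ^ q)"
  shows "integrable M (\<lambda>x. norm (f x) ^ p)"
proof (rule Bochner_Integration.integrable_bound)
  show "integrable M (\<lambda>x. 1 + norm (f x) ^ q)"
    using int by simp
  have "norm (f x) ^ p \<le> 1 + norm (f x) ^ q" for x
  proof (cases "norm (f x) \<le> 1")
    case True
    then have "norm (f x) ^ p \<le> 1"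
      by (simp add: power_le_one)
    then show ?thesis
      by (simp add: add_increasing2)
  next
    case False
    then have "norm (f x) ^ p \<le> norm (f x) ^ q"
      using \<open>p \<le> q\<close> by (intro power_increasing) auto
    then show ?thesis
      by simp
  qed
  then show "AE x in M. norm (norm (f x) ^ p) \<le> norm (1 + norm (f x) ^ q)"
    by (intro AE_I2) simp
qed (use f in measurable)

lemma ident_distr_integrable_iff:
  fixes f :: "'c::topological_space \<Rightarrow> 'b::{banach, second_countable_topology}"
  assumes "distr M borel U = distr M borel V"
    and "U \<in> borel_measurable M" "V \<in> borel_measurable M" "f \<in> borel_measurable borel"
  shows "integrable M (\<lambda>\<omega>. f (U \<omega>)) \<longleftrightarrow> integrable M (\<lambda>\<omega>. f (V \<omega>))"
  using assms by (simp flip: integrable_distr_eq)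

lemma ident_distr_integral_eq:
  fixes f :: "'c::topological_space \<Rightarrow> 'b::{banach, second_countable_topology}"
  assumes "distr M borel U = distr M borel V"
    and "U \<in> borel_measurable M" "V \<in> borel_measurable M" "f \<in> borel_measurable borel"
  shows "integral\<^sup>L M (\<lambda>\<omega>. f (U \<omega>)) = integral\<^sup>L M (\<lambda>\<omega>. f (V \<omega>))"
  using assms by (simp flip: integral_distr)

lemma (in prob_space) expectation_mean_ident_distr:
  fixes U :: "nat \<Rightarrow> 'a \<Rightarrow> 'c::topological_space" and f :: "'c \<Rightarrow> real"
  assumes ident: "\<And>i. distr M borel (U i) = distr M borel (U 0)"
    and meas: "\<And>i. U i \<in> borel_measurable M" and f: "f \<in> borel_measurable borel"
    and int: "integrable M (\<lambda>\<omega>. f (U 0 \<omega>))"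
  shows "integrable M (\<lambda>\<omega>. (\<Sum>i<n. f (U i \<omega>)) / real n)"
    and "expectation (\<lambda>\<omega>. (\<Sum>i<n. f (U i \<omega>)) / real n)
      = (if n = 0 then 0 else expectation (\<lambda>\<omega>. f (U 0 \<omega>)))"
proof -
  have int_i: "integrable M (\<lambda>\<omega>. f (U i \<omega>))" for i
    using ident_distr_integrable_iff[OF ident meas meas f] int by blast
  then show "integrable M (\<lambda>\<omega>. (\<Sum>i<n. f (U i \<omega>)) / real n)"
    by simp
  have "(\<Sum>i<n. expectation (\<lambda>\<omega>. f (U i \<omega>))) = (\<Sum>i<n. expectation (\<lambda>\<omega>. f (U 0 \<omega>)))"
    by (intro sum.cong refl ident_distr_integral_eq[OF ident meas meas f])
  then show "expectation (\<lambda>\<omega>. (\<Sum>i<n. f (U i \<omega>)) / real n)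
      = (if n = 0 then 0 else expectation (\<lambda>\<omega>. f (U 0 \<omega>)))"
    using int_i by simp
qed

lemma (in prob_space) expectation_square_sum_indep:
  fixes e :: "nat \<Rightarrow> 'a \<Rightarrow> real"
  assumes indep: "indep_vars (\<lambda>_. borel) e UNIV"
    and int: "\<And>i. integrable M (e i)" and int2: "\<And>i. integrable M (\<lambda>\<omega>. (e i \<omega>)\<^sup>2)"
    and centred: "\<And>i. expectation (e i) = 0"
  shows "integrable M (\<lambda>\<omega>. (\<Sum>i<n. e i \<omega>)\<^sup>2)"
    and "expectation (\<lambda>\<omega>. (\<Sum>i<n. e i \<omega>)\<^sup>2) = (\<Sum>i<n. expectation (\<lambda>\<omega>. (e i \<omega>)\<^sup>2))"
proof -
  have cross: "integrable M (\<lambda>\<omega>. e i \<omega> * e j \<omega>) \<and>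
      expectation (\<lambda>\<omega>. e i \<omega> * e j \<omega>) = (if i = j then expectation (\<lambda>\<omega>. (e i \<omega>)\<^sup>2) else 0)"
    for i j
  proof (cases "i = j")
    case True
    then show ?thesis
      using int2[of i] by (simp add: power2_eq_square)
  next
    case False
    have "indep_vars (\<lambda>_. borel) e {i, j}"
      using indep by (rule indep_vars_subset) simp
    then have "integrable M (\<lambda>\<omega>. \<Prod>k\<in>{i, j}. e k \<omega>)"
      and "expectation (\<lambda>\<omega>. \<Prod>k\<in>{i, j}. e k \<omega>) = (\<Prod>k\<in>{i, j}. expectation (e k))"
      using int by (auto intro: indep_vars_integrable indep_vars_lebesgue_integral)
    then show ?thesis
      using False centred by simp
  qed
  have square: "(\<Sum>i<n. e i \<omega>)\<^sup>2 = (\<Sum>i<n. \<Sum>j<n. e i \<omega> * e j \<omega>)" for \<omega>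
    by (simp add: power2_eq_square sum_product)
  show "integrable M (\<lambda>\<omega>. (\<Sum>i<n. e i \<omega>)\<^sup>2)"
    unfolding square using cross by simp
  show "expectation (\<lambda>\<omega>. (\<Sum>i<n. e i \<omega>)\<^sup>2) = (\<Sum>i<n. expectation (\<lambda>\<omega>. (e i \<omega>)\<^sup>2))"
    unfolding square using cross by (simp add: integrable_sum)
qed

lemma measure_tendsto_zero_if_le:
  assumes le: "\<And>n. measure M (A n) \<le> g n" and g: "g \<longlonglongrightarrow> 0"
  shows "(\<lambda>n. measure M (A n)) \<longlonglongrightarrow> 0"
proof (rule Lim_null_comparison[OF always_eventually g], intro allI)
  show "norm (measure M (A n)) \<le> g n" for n
    using le[of n] by simp
qed

lemma (in prob_space) o_P_one_iff:
  "o_P M Z (\<lambda>_. 1) \<longleftrightarrow> (\<forall>e>0. (\<lambda>n. prob {\<omega> \<in> space M. e < \<bar>Z n \<omega>\<bar>}) \<longlonglongrightarrow> 0)"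
  unfolding o_P_def by simp

lemma (in prob_space) o_P_one_if_expectation_tendsto_zero:
  fixes Z :: "nat \<Rightarrow> 'a \<Rightarrow> real"
  assumes int: "\<And>n. integrable M (Z n)" and nonneg: "\<And>n \<omega>. \<omega> \<in> space M \<Longrightarrow> 0 \<le> Z n \<omega>"
    and lim: "(\<lambda>n. expectation (Z n)) \<longlonglongrightarrow> 0"
  shows "o_P M Z (\<lambda>_. 1)"
  unfolding o_P_one_iff
proof (intro allI impI)
  fix e :: real assume "0 < e"
  show "(\<lambda>n. prob {\<omega> \<in> space M. e < \<bar>Z n \<omega>\<bar>}) \<longlonglongrightarrow> 0"
  proof (rule measure_tendsto_zero_if_le)
    show "(\<lambda>n. expectation (Z n) / e) \<longlonglongrightarrow> 0"
      using tendsto_divide_zero[OF lim] .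
    fix n
    have "prob {\<omega> \<in> space M. e < \<bar>Z n \<omega>\<bar>} \<le> prob {\<omega> \<in> space M. e \<le> Z n \<omega>}"
      using nonneg int by (intro finite_measure_mono) auto
    also have "\<dots> \<le> expectation (Z n) / e"
      using int nonneg \<open>0 < e\<close> by (intro integral_Markov_inequality_measure[where A="space M"]) auto
    finally show "prob {\<omega> \<in> space M. e < \<bar>Z n \<omega>\<bar>} \<le> expectation (Z n) / e" .
  qed
qed

lemma (in prob_space) o_P_one_mono:
  fixes Z W :: "nat \<Rightarrow> 'a \<Rightarrow> real"
  assumes W: "o_P M W (\<lambda>_. 1)" and W_meas: "\<And>n. W n \<in> borel_measurable M"
    and le: "\<And>n \<omega>. \<omega> \<in> space M \<Longrightarrow> \<bar>Z n \<omega>\<bar> \<le> W n \<omega>"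
  shows "o_P M Z (\<lambda>_. 1)"
  unfolding o_P_one_iff
proof (intro allI impI)
  fix e :: real assume "0 < e"
  show "(\<lambda>n. prob {\<omega> \<in> space M. e < \<bar>Z n \<omega>\<bar>}) \<longlonglongrightarrow> 0"
  proof (rule measure_tendsto_zero_if_le)
    show "(\<lambda>n. prob {\<omega> \<in> space M. e < \<bar>W n \<omega>\<bar>}) \<longlonglongrightarrow> 0"
      using W \<open>0 < e\<close> unfolding o_P_one_iff by blast
    show "prob {\<omega> \<in> space M. e < \<bar>Z n \<omega>\<bar>} \<le> prob {\<omega> \<in> space M. e < \<bar>W n \<omega>\<bar>}" for n
      using le[of _ n] W_meas by (intro finite_measure_mono) force+
  qed
qed

lemma (in prob_space) o_P_one_add:
  fixes A C :: "nat \<Rightarrow> 'a \<Rightarrow> real"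
  assumes A: "o_P M A (\<lambda>_. 1)" and C: "o_P M C (\<lambda>_. 1)"
    and meas: "\<And>n. A n \<in> borel_measurable M" "\<And>n. C n \<in> borel_measurable M"
  shows "o_P M (\<lambda>n \<omega>. A n \<omega> + C n \<omega>) (\<lambda>_. 1)"
  unfolding o_P_one_iff
proof (intro allI impI)
  fix e :: real assume "0 < e"
  let ?pA = "\<lambda>n. prob {\<omega> \<in> space M. e / 2 < \<bar>A n \<omega>\<bar>}"
  let ?pC = "\<lambda>n. prob {\<omega> \<in> space M. e / 2 < \<bar>C n \<omega>\<bar>}"
  show "(\<lambda>n. prob {\<omega> \<in> space M. e < \<bar>A n \<omega> + C n \<omega>\<bar>}) \<longlonglongrightarrow> 0"
  proof (rule measure_tendsto_zero_if_le)
    have "?pA \<longlonglongrightarrow> 0" "?pC \<longlonglongrightarrow> 0"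
      using A C \<open>0 < e\<close> unfolding o_P_one_iff by (meson half_gt_zero)+
    then show "(\<lambda>n. ?pA n + ?pC n) \<longlonglongrightarrow> 0"
      using tendsto_add by fastforce
    fix n
    have "prob {\<omega> \<in> space M. e < \<bar>A n \<omega> + C n \<omega>\<bar>}
        \<le> prob ({\<omega> \<in> space M. e / 2 < \<bar>A n \<omega>\<bar>} \<union> {\<omega> \<in> space M. e / 2 < \<bar>C n \<omega>\<bar>})"
      using meas by (intro finite_measure_mono) auto
    also have "\<dots> \<le> ?pA n + ?pC n"
      using meas by (intro measure_Un_le) auto
    finally show "prob {\<omega> \<in> space M. e < \<bar>A n \<omega> + C n \<omega>\<bar>} \<le> ?pA n + ?pC n" .
  qed
qed

lemma (in prob_space) o_P_one_cmult:
  fixes Z :: "nat \<Rightarrow> 'a \<Rightarrow> real"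
  assumes "o_P M Z (\<lambda>_. 1)"
  shows "o_P M (\<lambda>n \<omega>. c * Z n \<omega>) (\<lambda>_. 1)"
proof (cases "c = 0")
  case False
  then have "{\<omega> \<in> space M. e < \<bar>c * Z n \<omega>\<bar>} = {\<omega> \<in> space M. e / \<bar>c\<bar> < \<bar>Z n \<omega>\<bar>}" for e n
    by (simp add: abs_mult divide_less_eq mult.commute)
  with assms False show ?thesis
    unfolding o_P_one_iff by simp
qed (simp add: o_P_one_iff)

lemma (in prob_space) prob_abs_mult_greater_le:
  fixes A B :: "'a \<Rightarrow> real"
  assumes A_meas [measurable]: "A \<in> borel_measurable M" and B_int: "integrable M B"
    and B_nonneg: "\<And>\<omega>. \<omega> \<in> space M \<Longrightarrow> 0 \<le> B \<omega>" and "0 < L"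
  shows "prob {\<omega> \<in> space M. e < \<bar>A \<omega> * B \<omega>\<bar>}
    \<le> prob {\<omega> \<in> space M. e / L < \<bar>A \<omega>\<bar>} + expectation B / L"
proof -
  have B_meas [measurable]: "B \<in> borel_measurable M"
    using B_int by blast
  have small: "\<bar>A \<omega> * B \<omega>\<bar> \<le> e" if "\<omega> \<in> space M" "\<bar>A \<omega>\<bar> \<le> e / L" "B \<omega> < L" for \<omega>
  proof -
    have "\<bar>A \<omega> * B \<omega>\<bar> = \<bar>A \<omega>\<bar> * B \<omega>"
      using B_nonneg[OF that(1)] by (simp add: abs_mult)
    also have "\<dots> \<le> e / L * L"
      using that B_nonneg[OF that(1)] by (intro mult_mono) auto
    finally show ?thesis
      using \<open>0 < L\<close> by simp
  qed
  have "prob {\<omega> \<in> space M. e < \<bar>A \<omega> * B \<omega>\<bar>}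
      \<le> prob ({\<omega> \<in> space M. e / L < \<bar>A \<omega>\<bar>} \<union> {\<omega> \<in> space M. L \<le> B \<omega>})"
    using small by (intro finite_measure_mono) (force, measurable)
  also have "\<dots> \<le> prob {\<omega> \<in> space M. e / L < \<bar>A \<omega>\<bar>} + prob {\<omega> \<in> space M. L \<le> B \<omega>}"
    by (intro measure_Un_le) measurable
  also have "prob {\<omega> \<in> space M. L \<le> B \<omega>} \<le> expectation B / L"
    using B_int B_nonneg \<open>0 < L\<close>
    by (intro integral_Markov_inequality_measure[where A="space M"]) auto
  finally show ?thesis by simp
qed

lemma (in prob_space) o_P_one_mult_L1_bounded:
  fixes A B :: "nat \<Rightarrow> 'a \<Rightarrow> real"
  assumes A: "o_P M A (\<lambda>_. 1)" and A_meas: "\<And>n. A n \<in> borel_measurable M"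
    and B_int: "\<And>n. integrable M (B n)" and B_nonneg: "\<And>n \<omega>. \<omega> \<in> space M \<Longrightarrow> 0 \<le> B n \<omega>"
    and B_bounded: "\<And>n. expectation (B n) \<le> K"
  shows "o_P M (\<lambda>n \<omega>. A n \<omega> * B n \<omega>) (\<lambda>_. 1)"
  unfolding o_P_one_iff
proof (intro allI impI)
  fix e :: real assume "0 < e"
  have "0 \<le> expectation (B 0)"
    by (intro integral_nonneg_AE AE_I2 B_nonneg)
  with B_bounded[of 0] have "0 \<le> K"
    by linarith
  have tail_bound: "prob {\<omega> \<in> space M. e < \<bar>A n \<omega> * B n \<omega>\<bar>}
      \<le> prob {\<omega> \<in> space M. e / L < \<bar>A n \<omega>\<bar>} + K / L" if "0 < L" for n L
  proof -
    have "expectation (B n) / L \<le> K / L"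
      using B_bounded[of n] that by (simp add: divide_right_mono)
    then show ?thesis
      using prob_abs_mult_greater_le[OF A_meas[of n] B_int[of n] B_nonneg[of _ n] that, of e]
      by linarith
  qed
  show "(\<lambda>n. prob {\<omega> \<in> space M. e < \<bar>A n \<omega> * B n \<omega>\<bar>}) \<longlonglongrightarrow> 0"
  proof (rule order_tendstoI)
    show "\<forall>\<^sub>F n in sequentially. d < prob {\<omega> \<in> space M. e < \<bar>A n \<omega> * B n \<omega>\<bar>}" if "d < 0" for d
      using that by (intro always_eventually allI) (simp add: less_le_trans[OF _ measure_nonneg])
    fix d :: real assume "0 < d"
    define L where "L = 2 * (K + 1) / d"
    have "0 < L" "K / L < d / 2"
      using \<open>0 \<le> K\<close> \<open>0 < d\<close> by (simp_all add: L_def field_simps)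
    have "\<forall>\<^sub>F n in sequentially. prob {\<omega> \<in> space M. e / L < \<bar>A n \<omega>\<bar>} < d / 2"
    proof (rule order_tendstoD(2))
      show "(\<lambda>n. prob {\<omega> \<in> space M. e / L < \<bar>A n \<omega>\<bar>}) \<longlonglongrightarrow> 0"
        using A \<open>0 < e\<close> \<open>0 < L\<close> unfolding o_P_one_iff by simp
    qed (use \<open>0 < d\<close> in simp)
    then show "\<forall>\<^sub>F n in sequentially. prob {\<omega> \<in> space M. e < \<bar>A n \<omega> * B n \<omega>\<bar>} < d"
    proof eventually_elim
      case (elim n)
      then show ?case
        using tail_bound[OF \<open>0 < L\<close>, of n] \<open>K / L < d / 2\<close> by linarith
    qed
  qed
qed

lemma (in prob_space) o_P_one_square_div_rate:
  fixes D :: "nat \<Rightarrow> 'a \<Rightarrow> real"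
  assumes D: "o_P M D r" and r_nonneg: "\<And>n. 0 \<le> r n"
  shows "o_P M (\<lambda>n \<omega>. (D n \<omega> / r n)\<^sup>2) (\<lambda>_. 1)"
  unfolding o_P_one_iff
proof (intro allI impI)
  fix e :: real assume "0 < e"
  have "e < \<bar>(D n \<omega> / r n)\<^sup>2\<bar> \<longleftrightarrow> sqrt e < \<bar>D n \<omega>\<bar> / r n" for n \<omega>
  proof -
    have "\<bar>D n \<omega>\<bar> / r n = \<bar>D n \<omega> / r n\<bar>"
      using r_nonneg[of n] by (simp add: abs_divide)
    then show ?thesis
      by (metis abs_power2 real_sqrt_abs real_sqrt_less_iff)
  qed
  moreover have "(\<lambda>n. prob {\<omega> \<in> space M. sqrt e < \<bar>D n \<omega>\<bar> / r n}) \<longlonglongrightarrow> 0"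
    using D \<open>0 < e\<close> unfolding o_P_def by simp
  ultimately show "(\<lambda>n. prob {\<omega> \<in> space M. e < \<bar>(D n \<omega> / r n)\<^sup>2\<bar>}) \<longlonglongrightarrow> 0"
    by simp
qed

lemma (in prob_space) o_P_one_sqrt_mult_square_mean:
  fixes e :: "nat \<Rightarrow> 'a \<Rightarrow> real"
  assumes indep: "indep_vars (\<lambda>_. borel) e UNIV"
    and meas: "\<And>i. e i \<in> borel_measurable M"
    and ident: "\<And>i. distr M borel (e i) = distr M borel (e 0)"
    and int2: "integrable M (\<lambda>\<omega>. (e 0 \<omega>)\<^sup>2)" and centred: "expectation (e 0) = 0"
  shows "o_P M (\<lambda>n \<omega>. sqrt (real n) * ((\<Sum>i<n. e i \<omega>) / real n)\<^sup>2) (\<lambda>_. 1)"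
proof (rule o_P_one_if_expectation_tendsto_zero)
  have id_meas: "(\<lambda>x::real. x) \<in> borel_measurable borel"
    and square_meas: "(\<lambda>x::real. x\<^sup>2) \<in> borel_measurable borel"
    by simp measurable
  note transfer_int = ident_distr_integrable_iff[OF ident meas meas]
    and transfer_eq = ident_distr_integral_eq[OF ident meas meas]
  have "integrable M (e i)" for i
    using transfer_int[OF id_meas] square_integrable_imp_integrable[OF meas int2] by blast
  moreover have "integrable M (\<lambda>\<omega>. (e i \<omega>)\<^sup>2)" for i
    using transfer_int[OF square_meas] int2 by blast
  moreover have "expectation (e i) = 0" for i
    using transfer_eq[OF id_meas] centred by (rule trans)
  ultimately have int_sum: "integrable M (\<lambda>\<omega>. (\<Sum>i<n. e i \<omega>)\<^sup>2)"
    and E_sum: "expectation (\<lambda>\<omega>. (\<Sum>i<n. e i \<omega>)\<^sup>2) = (\<Sum>i<n. expectation (\<lambda>\<omega>. (e i \<omega>)\<^sup>2))"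
    for n using expectation_square_sum_indep[OF indep] by blast+
  have "(\<Sum>i<n. expectation (\<lambda>\<omega>. (e i \<omega>)\<^sup>2)) = (\<Sum>i<n. expectation (\<lambda>\<omega>. (e 0 \<omega>)\<^sup>2))" for n
    by (intro sum.cong refl transfer_eq[OF square_meas])
  then have E_stat: "expectation (\<lambda>\<omega>. sqrt (real n) * ((\<Sum>i<n. e i \<omega>) / real n)\<^sup>2)
      = expectation (\<lambda>\<omega>. (e 0 \<omega>)\<^sup>2) * (sqrt (real n) * real n / (real n)\<^sup>2)" for n
    using E_sum by (simp add: power_divide)
  show "(\<lambda>n. expectation (\<lambda>\<omega>. sqrt (real n) * ((\<Sum>i<n. e i \<omega>) / real n)\<^sup>2)) \<longlonglongrightarrow> 0"
    unfolding E_stat by (intro tendsto_mult_right_zero) real_asymp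
  show "integrable M (\<lambda>\<omega>. sqrt (real n) * ((\<Sum>i<n. e i \<omega>) / real n)\<^sup>2)" for n
    using int_sum by (simp add: power_divide)
qed simp

lemma (in prob_space) o_P_one_sqrt_mult_square_mult_mean:
  fixes D :: "nat \<Rightarrow> 'a \<Rightarrow> real" and X :: "nat \<Rightarrow> 'a \<Rightarrow> 'h::real_normed_vector"
  assumes D: "o_P M D (\<lambda>n. real n powr (-1/4))" and D_meas: "\<And>n. D n \<in> borel_measurable M"
    and X_ident: "\<And>i. distr M borel (X i) = distr M borel (X 0)"
    and X_meas: "\<And>i. X i \<in> borel_measurable M"
    and X_square: "integrable M (\<lambda>\<omega>. (norm (X 0 \<omega>))\<^sup>2)"
  shows "o_P M (\<lambda>n \<omega>. sqrt (real n) * (D n \<omega>)\<^sup>2 * ((\<Sum>j<n. (norm (X j \<omega>))\<^sup>2) / real n)) (\<lambda>_. 1)"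
proof (rule o_P_one_mult_L1_bounded[where K = "expectation (\<lambda>\<omega>. (norm (X 0 \<omega>))\<^sup>2)"])
  have "o_P M (\<lambda>n \<omega>. (D n \<omega> / real n powr (-1/4))\<^sup>2) (\<lambda>_. 1)"
    using D by (rule o_P_one_square_div_rate) simp
  then show "o_P M (\<lambda>n \<omega>. sqrt (real n) * (D n \<omega>)\<^sup>2) (\<lambda>_. 1)"
    by (simp only: square_div_powr_neg_quarter)
  have "(\<lambda>x::'h. (norm x)\<^sup>2) \<in> borel_measurable borel"
    by measurable
  note X_mean = expectation_mean_ident_distr[where U = X and f = "\<lambda>x. (norm x)\<^sup>2",
      OF X_ident X_meas this X_square]
  show "integrable M (\<lambda>\<omega>. (\<Sum>j<n. (norm (X j \<omega>))\<^sup>2) / real n)" for n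
    by (rule X_mean(1))
  show "expectation (\<lambda>\<omega>. (\<Sum>j<n. (norm (X j \<omega>))\<^sup>2) / real n)
      \<le> expectation (\<lambda>\<omega>. (norm (X 0 \<omega>))\<^sup>2)" for n
    using X_mean(2)[of n] by (simp add: integral_nonneg_AE)
  show "0 \<le> (\<Sum>j<n. (norm (X j \<omega>))\<^sup>2) / real n" for n \<omega>
    by (simp add: sum_nonneg)
qed (use D_meas in measurable)

theorem lemmaA1:
  fixes M :: "'a measure"
    and X :: "nat \<Rightarrow> 'a \<Rightarrow> 'h::{real_inner, complete_space, second_countable_topology}"
    and Y eps :: "nat \<Rightarrow> 'a \<Rightarrow> real"
    and \<alpha> :: real and \<beta> :: 'h
    and ahat :: "nat \<Rightarrow> 'a \<Rightarrow> real" and bhat :: "nat \<Rightarrow> 'a \<Rightarrow> 'h"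
  assumes P: "prob_space M"
    and X_meas: "\<And>i. X i \<in> borel_measurable M"
    and eps_meas: "\<And>i. eps i \<in> borel_measurable M"
    and X_indep: "prob_space.indep_vars M (\<lambda>_. borel) X UNIV"
    and X_ident: "\<And>i. distr M borel (X i) = distr M borel (X 0)"
    and eps_indep: "prob_space.indep_vars M (\<lambda>_. borel) eps UNIV"
    and eps_ident: "\<And>i. distr M borel (eps i) = distr M borel (eps 0)"
    and X_eps_indep: "prob_space.indep_set M
          (sets (vimage_algebra (space M) (\<lambda>\<omega> i. X i \<omega>) (Pi\<^sub>M UNIV (\<lambda>_. borel))))
          (sets (vimage_algebra (space M) (\<lambda>\<omega> i. eps i \<omega>) (Pi\<^sub>M UNIV (\<lambda>_. borel))))"
    and model: "\<And>i \<omega>. \<omega> \<in> space M \<Longrightarrow> Y i \<omega> = \<alpha> + X i \<omega> \<bullet> \<beta> + eps i \<omega>"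
    and eps_int: "integrable M (eps 0)"
    and eps_centred: "integral\<^sup>L M (eps 0) = 0"
    and cdf: "\<exists>f f'. (\<forall>t. ((\<lambda>s. measure M {\<omega> \<in> space M. eps 0 \<omega> \<le> s}) has_real_derivative f t) (at t))
                 \<and> (\<forall>t. (f has_real_derivative f' t) (at t))
                 \<and> bounded (range f) \<and> bounded (range f')"
    and ahat_meas: "\<And>n. ahat n \<in> borel_measurable M"
    and bhat_meas: "\<And>n. bhat n \<in> borel_measurable M"
    and cases:
      "((\<forall>n. \<forall>\<omega>\<in>space M. ahat n \<omega> =
            (\<Sum>i<n. Y i \<omega>) / real n - ((1 / real n) *\<^sub>R (\<Sum>i<n. X i \<omega>)) \<bullet> bhat n \<omega>)
        \<and> o_P M (\<lambda>n \<omega>. norm (bhat n \<omega> - \<beta>)) (\<lambda>n. real n powr (-1/4))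
        \<and> integrable M (\<lambda>\<omega>. norm (X 0 \<omega>) ^ 4)
        \<and> integrable M (\<lambda>\<omega>. (eps 0 \<omega>)\<^sup>2))
       \<or>
       (\<alpha> = 0 \<and> (\<forall>n. \<forall>\<omega>\<in>space M. ahat n \<omega> = 0)
        \<and> o_P M (\<lambda>n \<omega>. norm (bhat n \<omega> - \<beta>)) (\<lambda>n. real n powr (-1/4))
        \<and> integrable M (X 0) \<and> integral\<^sup>L M (X 0) = 0
        \<and> integrable M (\<lambda>\<omega>. norm (X 0 \<omega>) ^ 2))"
  shows "o_P M (\<lambda>n \<omega>. (1 / sqrt (real n)) *
            (\<Sum>j<n. ((Y j \<omega> - ahat n \<omega> - X j \<omega> \<bullet> bhat n \<omega>) - eps j \<omega>)\<^sup>2)) (\<lambda>_. 1)"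
proof -
  interpret prob_space M by (rule P)
  note [measurable] = X_meas eps_meas ahat_meas bhat_meas
  let ?T = "\<lambda>n \<omega>. 1 / sqrt (real n) *
    (\<Sum>j<n. (Y j \<omega> - ahat n \<omega> - X j \<omega> \<bullet> bhat n \<omega> - eps j \<omega>)\<^sup>2)"
  let ?R = "\<lambda>n \<omega>. sqrt (real n) * (norm (bhat n \<omega> - \<beta>))\<^sup>2 * ((\<Sum>j<n. (norm (X j \<omega>))\<^sup>2) / real n)"
  have T_abs: "\<bar>?T n \<omega>\<bar> = ?T n \<omega>" for n \<omega>
    by (simp add: sum_nonneg)
  have "o_P M (\<lambda>n \<omega>. norm (bhat n \<omega> - \<beta>)) (\<lambda>n. real n powr (-1/4))"
    using cases by blast
  moreover have "integrable M (\<lambda>\<omega>. (norm (X 0 \<omega>))\<^sup>2)"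
    using cases integrable_norm_power_mono[of 2 4 "X 0"] by auto
  ultimately have R: "o_P M ?R (\<lambda>_. 1)"
    by (intro o_P_one_sqrt_mult_square_mult_mean[where X = X, OF _ _ X_ident X_meas]) simp_all
  from cases show ?thesis
  proof (elim disjE conjE)
    assume intercept: "\<forall>n. \<forall>\<omega>\<in>space M. ahat n \<omega> =
        (\<Sum>i<n. Y i \<omega>) / real n - ((1 / real n) *\<^sub>R (\<Sum>i<n. X i \<omega>)) \<bullet> bhat n \<omega>"
      and "integrable M (\<lambda>\<omega>. (eps 0 \<omega>)\<^sup>2)"
    then have "o_P M (\<lambda>n \<omega>. sqrt (real n) * ((\<Sum>i<n. eps i \<omega>) / real n)\<^sup>2) (\<lambda>_. 1)"
      using o_P_one_sqrt_mult_square_mean[OF eps_indep eps_meas eps_ident] eps_centred by blast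
    then show ?thesis
    proof (rule o_P_one_mono[OF o_P_one_add[OF o_P_one_cmult o_P_one_cmult[OF R]]])
      fix n \<omega> assume "\<omega> \<in> space M"
      then have "?T n \<omega> \<le> 4 * (sqrt (real n) * ((\<Sum>i<n. eps i \<omega>) / real n)\<^sup>2) + 6 * ?R n \<omega>"
        using model intercept by (intro residual_sum_square_le_mean_intercept[where \<alpha> = \<alpha>]) auto
      then show "\<bar>?T n \<omega>\<bar> \<le> 4 * (sqrt (real n) * ((\<Sum>i<n. eps i \<omega>) / real n)\<^sup>2) + 6 * ?R n \<omega>"
        unfolding T_abs .
    qed measurable
  next
    assume "\<alpha> = 0" and ahat: "\<forall>n. \<forall>\<omega>\<in>space M. ahat n \<omega> = 0"
    show ?thesis
    proof (rule o_P_one_mono[OF o_P_one_cmult[OF R]])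
      fix n \<omega> assume "\<omega> \<in> space M"
      then have "?T n \<omega> \<le> 2 * (sqrt (real n) * (\<alpha> - ahat n \<omega>)\<^sup>2) + 2 * ?R n \<omega>"
        using model by (intro residual_sum_square_le) auto
      with \<open>\<omega> \<in> space M\<close> \<open>\<alpha> = 0\<close> ahat show "\<bar>?T n \<omega>\<bar> \<le> 2 * ?R n \<omega>"
        unfolding T_abs by simp
    qed measurable
  qed
qed

end
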